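(* Let $\Omega$ be a finite set, $(H_i\mid i\in\Omega)$ finite abelian groups with $|H_i|\geqslant2$ for all $i$, $\mathbf{H}=\prod_{i\in\Omega}H_i$, $\mathbf{P}=(\Omega,\preccurlyeq_{\mathbf{P}})$ a poset, and $\Lambda$ the dual partition of $\mathcal{Q}(\mathbf{H},\mathbf{P})$. Let $\alpha,\gamma\in\hat{\mathbf{H}}$ lie in the same block of $\Lambda$, and let $D=\langle\mathrm{supp}(\alpha)\rangle_{\overline{\mathbf{P}}}$, $B=\langle\mathrm{supp}(\gamma)\rangle_{\overline{\mathbf{P}}}$. Then $|D|-|\min_{\mathbf{P}}(D)|=|B|-|\min_{\mathbf{P}}(B)|$.
   Context: $\hat{\mathbf{H}}$ is the character group of $\mathbf{H}$, identified with $\prod_i\hat{H_i}$ via $\alpha(\beta)=\prod_i\alpha_{(i)}(\beta_{(i)})$; $\mathrm{supp}$ of a codeword is the set of coordinates where it is not the identity. $\min_{\mathbf{P}}(B)$ is the set of minimal elements of $B$ in $\mathbf{P}$. For a poset $\mathbf{Q}$ on $\Omega$, $\langle B\rangle_{\mathbf{Q}}$ is the down-closure of $B$ and $\mathrm{wt}_{\mathbf{Q}}(\beta)=|\langle\mathrm{supp}(\beta)\rangle_{\mathbf{Q}}|$; $\overline{\mathbf{P}}$ is the dual poset. $\mathcal{Q}(\mathbf{H},\mathbf{P})$ is the partition of $\mathbf{H}$ into classes of equal $\mathbf{P}$-weight, and $\Lambda$ is the partition of $\hat{\mathbf{H}}$ with $\chi\sim\psi$ iff $\sum_{b\in B}\chi(b)=\sum_{b\in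 B}\psi(b)$ for every block $B$ of $\mathcal{Q}(\mathbf{H},\mathbf{P})$. *)

theory Defs
  imports "HOL-Algebra.Group" Complex_Main
begin

definition characters :: "('a, 'b) monoid_scheme \<Rightarrow> ('a \<Rightarrow> complex) set" where
  "characters G = {\<chi>. \<chi> \<in> carrier G \<rightarrow>\<^sub>E UNIV
      \<and> (\<forall>x\<in>carrier G. cmod (\<chi> x) = 1)
      \<and> (\<forall>x\<in>carrier G. \<forall>y\<in>carrier G. \<chi> (x \<otimes>\<^bsub>G\<^esub> y) = \<chi> x * \<chi> y)}"

definition trivial_char :: "('a, 'b) monoid_scheme \<Rightarrow> ('a \<Rightarrow> complex) \<Rightarrow> bool" where
  "trivial_char G \<chi> \<longleftrightarrow> (\<forall>x\<in>carrier G. \<chi> x = 1)"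

definition prod_carrier :: "'i set \<Rightarrow> ('i \<Rightarrow> ('a, 'b) monoid_scheme) \<Rightarrow> ('i \<Rightarrow> 'a) set" where
  "prod_carrier \<Omega> H = (\<Pi>\<^sub>E i\<in>\<Omega>. carrier (H i))"

(* Characters of the product group, identified with the product of the character groups *)
definition prod_characters :: "'i set \<Rightarrow> ('i \<Rightarrow> ('a, 'b) monoid_scheme) \<Rightarrow> ('i \<Rightarrow> 'a \<Rightarrow> complex) set" where
  "prod_characters \<Omega> H = (\<Pi>\<^sub>E i\<in>\<Omega>. characters (H i))"

definition char_eval :: "'i set \<Rightarrow> ('i \<Rightarrow> 'a \<Rightarrow> complex) \<Rightarrow> ('i \<Rightarrow> 'a) \<Rightarrow> complex" where
  "char_eval \<Omega> \<alpha> \<beta> = (\<Prod>i\<in>\<Omega>. \<alpha> i (\<beta> i))"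

definition supp_word :: "'i set \<Rightarrow> ('i \<Rightarrow> ('a, 'b) monoid_scheme) \<Rightarrow> ('i \<Rightarrow> 'a) \<Rightarrow> 'i set" where
  "supp_word \<Omega> H \<beta> = {i\<in>\<Omega>. \<beta> i \<noteq> \<one>\<^bsub>H i\<^esub>}"

definition supp_char :: "'i set \<Rightarrow> ('i \<Rightarrow> ('a, 'b) monoid_scheme) \<Rightarrow> ('i \<Rightarrow> 'a \<Rightarrow> complex) \<Rightarrow> 'i set" where
  "supp_char \<Omega> H \<alpha> = {i\<in>\<Omega>. \<not> trivial_char (H i) (\<alpha> i)}"

(* down-closure <B>_Q in the poset Q on \<Omega> (Q as a set of pairs (x,y) meaning x \<le>_Q y) *)
definition down_closure :: "'i set \<Rightarrow> 'i rel \<Rightarrow> 'i set \<Rightarrow> 'i set" where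
  "down_closure \<Omega> Q B = {j\<in>\<Omega>. \<exists>b\<in>B. (j, b) \<in> Q}"

definition min_elems :: "'i rel \<Rightarrow> 'i set \<Rightarrow> 'i set" where
  "min_elems P B = {x\<in>B. \<not> (\<exists>y\<in>B. (y, x) \<in> P \<and> y \<noteq> x)}"

definition P_weight :: "'i set \<Rightarrow> ('i \<Rightarrow> ('a, 'b) monoid_scheme) \<Rightarrow> 'i rel \<Rightarrow> ('i \<Rightarrow> 'a) \<Rightarrow> nat" where
  "P_weight \<Omega> H P \<beta> = card (down_closure \<Omega> P (supp_word \<Omega> H \<beta>))"

definition weight_partition :: "'i set \<Rightarrow> ('i \<Rightarrow> ('a, 'b) monoid_scheme) \<Rightarrow> 'i rel \<Rightarrow> ('i \<Rightarrow> 'a) set set" where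
  "weight_partition \<Omega> H P =
     {{\<beta>\<in>prod_carrier \<Omega> H. P_weight \<Omega> H P \<beta> = P_weight \<Omega> H P \<beta>0} | \<beta>0. \<beta>0 \<in> prod_carrier \<Omega> H}"

definition dual_partition_rel :: "'i set \<Rightarrow> ('i \<Rightarrow> ('a, 'b) monoid_scheme) \<Rightarrow> 'i rel
     \<Rightarrow> ('i \<Rightarrow> 'a \<Rightarrow> complex) \<Rightarrow> ('i \<Rightarrow> 'a \<Rightarrow> complex) \<Rightarrow> bool" where
  "dual_partition_rel \<Omega> H P \<chi> \<psi> \<longleftrightarrow>
     \<chi> \<in> prod_characters \<Omega> H \<and> \<psi> \<in> prod_characters \<Omega> H \<and>
     (\<forall>Bl\<in>weight_partition \<Omega> H P.
        (\<Sum>b\<in>Bl. char_eval \<Omega> \<chi> b) = (\<Sum>b\<in>Bl. char_eval \<Omega> \<psi> b))"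

end

theory Submission
  imports Defs
begin

text \<open>The weight of a codeword \<open>\<beta>\<close> is the size of \<open>supp_ideal \<beta>\<close>, the ideal generated by
  its support; so it suffices to sum a character \<open>\<alpha>\<close> over the codewords with a fixed ideal
  \<open>I\<close>. If some \<open>x \<in> I\<close> lies strictly below another element of \<open>I\<close> and \<open>\<alpha>\<^sub>x\<close> is
  nontrivial, translating the \<open>x\<close>-coordinate by a \<open>g\<close> with \<open>\<alpha>\<^sub>x(g) \<noteq> 1\<close> permutes these
  codewords and multiplies the sum by \<open>\<alpha>\<^sub>x(g)\<close>, so the sum vanishes. The ideals escaping
  this are exactly the subsets of \<open>top_ideal \<alpha> = (\<Omega> - D) \<union> min\<^sub>P(D)\<close>, and the sum over
  that ideal factors into nonzero numbers \<open>-1\<close>, \<open>1\<close>, \<open>|H\<^sub>i|\<close>, \<open>|H\<^sub>i| - 1\<close>. Hence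
  \<open>|top_ideal \<alpha>|\<close> is the largest weight on whose block the sum of \<open>\<alpha>\<close> is nonzero, an
  invariant of the block of \<open>\<Lambda>\<close> containing \<open>\<alpha>\<close>; and it equals
  \<open>|\<Omega>| - (|D| - |min\<^sub>P(D)|)\<close>.\<close>

lemma sum_eq_0_if_permutation_scales:
  fixes f :: "'a \<Rightarrow> 'b::field"
  assumes "bij_betw \<sigma> S S" and "\<And>s. s \<in> S \<Longrightarrow> f (\<sigma> s) = c * f s" and "c \<noteq> 1"
  shows "sum f S = 0"
proof -
  have "sum f S = (\<Sum>s\<in>S. f (\<sigma> s))" by (rule sum.reindex_bij_betw[OF assms(1), symmetric])
  also have "\<dots> = c * sum f S" using assms(2) by (simp add: sum_distrib_left)
  finally have "(1 - c) * sum f S = 0" by (simp add: algebra_simps)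
  with assms(3) show ?thesis by simp
qed

subsection \<open>Characters of a finite group\<close>

lemma character_mult:
  "\<chi> \<in> characters G \<Longrightarrow> x \<in> carrier G \<Longrightarrow> y \<in> carrier G \<Longrightarrow> \<chi> (x \<otimes>\<^bsub>G\<^esub> y) = \<chi> x * \<chi> y"
  unfolding characters_def by blast

lemma character_one:
  fixes G (structure)
  assumes "monoid G" and "\<chi> \<in> characters G"
  shows "\<chi> \<one>\<^bsub>G\<^esub> = 1"
proof -
  interpret monoid G by fact
  have "\<chi> \<one> = \<chi> \<one> * \<chi> \<one>"
    using character_mult[OF assms(2), of \<one> \<one>] by simp
  moreover have "cmod (\<chi> \<one>) = 1" using assms(2) unfolding characters_def by simp
  ultimately show ?thesis by (metis mult_cancel_right2 norm_zero zero_neq_one)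
qed

lemma sum_character_eq_0:
  fixes G (structure)
  assumes "group G" and "finite (carrier G)" and "\<chi> \<in> characters G" and "\<not> trivial_char G \<chi>"
  shows "(\<Sum>h\<in>carrier G. \<chi> h) = 0"
proof -
  interpret group G by fact
  obtain g where g: "g \<in> carrier G" "\<chi> g \<noteq> 1" using assms(4) unfolding trivial_char_def by auto
  have "bij_betw (\<lambda>h. h \<otimes> g) (carrier G) (carrier G)"
    by (rule bij_betw_byWitness[where f' = "\<lambda>h. h \<otimes> inv g"]) (auto simp: g m_assoc)
  then show ?thesis
    by (rule sum_eq_0_if_permutation_scales)
       (use g character_mult[OF assms(3)] in \<open>auto simp: mult.commute\<close>)
qed

lemma down_closure_mono: "S \<subseteq> T \<Longrightarrow> down_closure \<Omega> P S \<subseteq> down_closure \<Omega> P T"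
  unfolding down_closure_def by blast

locale poset_space =
  fixes \<Omega> :: "'i set" and H :: "'i \<Rightarrow> 'a monoid" and P :: "'i rel"
  assumes finite_index: "finite \<Omega>"
    and comm_group_H: "\<And>i. i \<in> \<Omega> \<Longrightarrow> comm_group (H i)"
    and finite_H: "\<And>i. i \<in> \<Omega> \<Longrightarrow> finite (carrier (H i))"
    and card_H_ge_2: "\<And>i. i \<in> \<Omega> \<Longrightarrow> card (carrier (H i)) \<ge> 2"
    and P_subset: "P \<subseteq> \<Omega> \<times> \<Omega>" and partial_order_P: "partial_order_on \<Omega> P"
begin

lemma P_refl: "i \<in> \<Omega> \<Longrightarrow> (i, i) \<in> P"
  using partial_order_P unfolding partial_order_on_def preorder_on_def refl_on_def by blast

lemma P_trans: "(i, j) \<in> P \<Longrightarrow> (j, k) \<in> P \<Longrightarrow> (i, k) \<in> P"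
  using partial_order_P unfolding partial_order_on_def preorder_on_def trans_def by blast

lemma P_antisym: "(i, j) \<in> P \<Longrightarrow> (j, i) \<in> P \<Longrightarrow> i = j"
  using partial_order_P unfolding partial_order_on_def antisym_def by blast

lemma P_in_index: "(i, j) \<in> P \<Longrightarrow> i \<in> \<Omega> \<and> j \<in> \<Omega>"
  using P_subset by blast

lemma finite_prod_carrier: "finite (prod_carrier \<Omega> H)"
  unfolding prod_carrier_def using finite_index finite_H by (intro finite_PiE) auto

subsection \<open>Ideals of a finite poset\<close>

definition is_ideal :: "'i set \<Rightarrow> bool" where
  "is_ideal I \<longleftrightarrow> I \<subseteq> \<Omega> \<and> (\<forall>j k. k \<in> I \<longrightarrow> (j, k) \<in> P \<longrightarrow> j \<in> I)"

lemma subset_down_closure: "S \<subseteq> \<Omega> \<Longrightarrow> S \<subseteq> down_closure \<Omega> P S"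
  unfolding down_closure_def using P_refl by blast

lemma is_ideal_down_closure: "is_ideal (down_closure \<Omega> P S)"
  unfolding is_ideal_def down_closure_def using P_trans P_in_index by blast

lemma down_closure_insert:
  "x \<in> down_closure \<Omega> P T \<Longrightarrow> down_closure \<Omega> P (insert x T) = down_closure \<Omega> P T"
  unfolding down_closure_def using P_trans by blast

text \<open>\<open>min_elems (P\<inverse>) S\<close> is the set of \<open>P\<close>-maximal elements of \<open>S\<close>.\<close>

lemma exists_maximal_above:
  assumes "S \<subseteq> \<Omega>" and "j \<in> S"
  shows "\<exists>m\<in>min_elems (P\<inverse>) S. (j, m) \<in> P"
proof -
  have "finite (P\<inverse>)"
    using P_subset finite_index by (simp add: finite_subset)
  then have "wf (P\<inverse> - Id)"
    using partial_order_P by (simp add: partial_order_on_well_order_on)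
  moreover have "j \<in> {k \<in> S. (j, k) \<in> P}" using assms P_refl by blast
  ultimately obtain m where m: "m \<in> {k \<in> S. (j, k) \<in> P}"
    and minimal: "\<And>k. (k, m) \<in> P\<inverse> - Id \<Longrightarrow> k \<notin> {k \<in> S. (j, k) \<in> P}"
    by (rule wfE_min) blast
  have "m \<in> min_elems (P\<inverse>) S"
    unfolding min_elems_def using m minimal P_trans by blast
  with m show ?thesis by blast
qed

lemma down_closure_eq_ideal_iff:
  assumes "is_ideal I" and "S \<subseteq> \<Omega>"
  shows "down_closure \<Omega> P S = I \<longleftrightarrow> S \<subseteq> I \<and> min_elems (P\<inverse>) I \<subseteq> S"
proof
  assume gen: "down_closure \<Omega> P S = I"
  show "S \<subseteq> I \<and> min_elems (P\<inverse>) I \<subseteq> S"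
  proof
    show "S \<subseteq> I" using gen subset_down_closure[OF assms(2)] by blast
    show "min_elems (P\<inverse>) I \<subseteq> S"
    proof
      fix m assume m: "m \<in> min_elems (P\<inverse>) I"
      then obtain b where "b \<in> S" "(m, b) \<in> P"
        using gen unfolding min_elems_def down_closure_def by blast
      moreover have "b \<in> I" using \<open>b \<in> S\<close> \<open>S \<subseteq> I\<close> by blast
      ultimately show "m \<in> S" using m unfolding min_elems_def by blast
    qed
  qed
next
  assume gen: "S \<subseteq> I \<and> min_elems (P\<inverse>) I \<subseteq> S"
  show "down_closure \<Omega> P S = I"
  proof
    show "down_closure \<Omega> P S \<subseteq> I"
      using assms(1) gen unfolding is_ideal_def down_closure_def by blast
    show "I \<subseteq> down_closure \<Omega> P S"
    proof
      fix j assume "j \<in> I"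
      then obtain m where "m \<in> min_elems (P\<inverse>) I" "(j, m) \<in> P"
        using exists_maximal_above assms(1) unfolding is_ideal_def by blast
      then show "j \<in> down_closure \<Omega> P S"
        using gen P_in_index unfolding down_closure_def by blast
    qed
  qed
qed

subsection \<open>Codewords with a prescribed ideal\<close>

definition supp_ideal :: "('i \<Rightarrow> 'a) \<Rightarrow> 'i set" where
  "supp_ideal \<beta> = down_closure \<Omega> P (supp_word \<Omega> H \<beta>)"

definition ideal_fiber :: "'i set \<Rightarrow> ('i \<Rightarrow> 'a) set" where
  "ideal_fiber I = {\<beta> \<in> prod_carrier \<Omega> H. supp_ideal \<beta> = I}"

definition shift :: "'i \<Rightarrow> 'a \<Rightarrow> ('i \<Rightarrow> 'a) \<Rightarrow> 'i \<Rightarrow> 'a" where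
  "shift x g \<beta> = \<beta>(x := \<beta> x \<otimes>\<^bsub>H x\<^esub> g)"

lemma P_weight_eq_card_supp_ideal: "P_weight \<Omega> H P \<beta> = card (supp_ideal \<beta>)"
  unfolding P_weight_def supp_ideal_def ..

lemma is_ideal_supp_ideal: "is_ideal (supp_ideal \<beta>)"
  unfolding supp_ideal_def by (rule is_ideal_down_closure)

lemma shift_in_prod_carrier:
  assumes "\<beta> \<in> prod_carrier \<Omega> H" and "x \<in> \<Omega>" and "g \<in> carrier (H x)"
  shows "shift x g \<beta> \<in> prod_carrier \<Omega> H"
proof -
  interpret comm_group "H x" using comm_group_H assms(2) .
  show ?thesis using assms unfolding prod_carrier_def shift_def by (auto simp: PiE_iff extensional_def)
qed

lemma shift_shift_inv:
  assumes "\<beta> \<in> prod_carrier \<Omega> H" and "x \<in> \<Omega>" and "g \<in> carrier (H x)"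
  shows "shift x (inv\<^bsub>H x\<^esub> g) (shift x g \<beta>) = \<beta>"
proof -
  interpret comm_group "H x" using comm_group_H assms(2) .
  have "\<beta> x \<in> carrier (H x)" using assms(1,2) unfolding prod_carrier_def by auto
  then show ?thesis unfolding shift_def using assms(3) by (auto simp: m_assoc)
qed

text \<open>Whatever happens at coordinate \<open>x\<close>, the generator above \<open>y\<close> keeps \<open>x\<close> in the ideal.\<close>

lemma supp_ideal_shift:
  assumes "x \<in> supp_ideal \<beta>" and "y \<in> supp_ideal \<beta>" and "(x, y) \<in> P" and "y \<noteq> x"
  shows "supp_ideal (shift x g \<beta>) = supp_ideal \<beta>"
proof -
  let ?S = "supp_word \<Omega> H \<beta>" and ?S' = "supp_word \<Omega> H (shift x g \<beta>)"
  have between: "?S - {x} \<subseteq> ?S'" "?S' \<subseteq> insert x ?S"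
    unfolding supp_word_def shift_def by auto
  obtain b where "b \<in> ?S" "(y, b) \<in> P"
    using assms(2) unfolding supp_ideal_def down_closure_def by blast
  moreover have "b \<noteq> x" using calculation assms(3,4) P_antisym P_trans by blast
  ultimately have "x \<in> down_closure \<Omega> P (?S - {x})"
    using assms(3) P_trans P_in_index unfolding down_closure_def by blast
  then have "supp_ideal \<beta> \<subseteq> down_closure \<Omega> P (?S - {x})"
    using down_closure_insert down_closure_mono[of ?S "insert x (?S - {x})"]
    unfolding supp_ideal_def by blast
  also have "\<dots> \<subseteq> supp_ideal (shift x g \<beta>)"
    unfolding supp_ideal_def using between(1) by (rule down_closure_mono)
  also have "\<dots> \<subseteq> supp_ideal \<beta>"
    using down_closure_mono[OF between(2)] down_closure_insert assms(1)
    unfolding supp_ideal_def by blast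
  finally show ?thesis by blast
qed

lemma bij_betw_shift_ideal_fiber:
  assumes "x \<in> I" and "y \<in> I" and "(x, y) \<in> P" and "y \<noteq> x" and "g \<in> carrier (H x)"
  shows "bij_betw (shift x g) (ideal_fiber I) (ideal_fiber I)"
proof -
  have x: "x \<in> \<Omega>" using assms(3) P_in_index by blast
  interpret comm_group "H x" using comm_group_H x .
  have closed: "shift x h \<beta> \<in> ideal_fiber I" if "\<beta> \<in> ideal_fiber I" "h \<in> carrier (H x)" for \<beta> h
    using that assms(1-4) shift_in_prod_carrier[OF _ x] supp_ideal_shift
    unfolding ideal_fiber_def by auto
  show ?thesis
  proof (rule bij_betw_byWitness[where f' = "shift x (inv\<^bsub>H x\<^esub> g)"])
    show "\<forall>\<beta>\<in>ideal_fiber I. shift x (inv\<^bsub>H x\<^esub> g) (shift x g \<beta>) = \<beta>"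
      using shift_shift_inv[OF _ x assms(5)] unfolding ideal_fiber_def by blast
    show "\<forall>\<beta>\<in>ideal_fiber I. shift x g (shift x (inv\<^bsub>H x\<^esub> g) \<beta>) = \<beta>"
      using shift_shift_inv[OF _ x inv_closed[OF assms(5)]] assms(5)
      unfolding ideal_fiber_def by auto
    show "shift x g ` ideal_fiber I \<subseteq> ideal_fiber I"
      using closed assms(5) by blast
    show "shift x (inv\<^bsub>H x\<^esub> g) ` ideal_fiber I \<subseteq> ideal_fiber I"
      using closed assms(5) by blast
  qed
qed

lemma char_eval_shift:
  assumes "\<alpha> \<in> prod_characters \<Omega> H" and "\<beta> \<in> prod_carrier \<Omega> H"
    and "x \<in> \<Omega>" and "g \<in> carrier (H x)"
  shows "char_eval \<Omega> \<alpha> (shift x g \<beta>) = \<alpha> x g * char_eval \<Omega> \<alpha> \<beta>"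
proof -
  have "\<alpha> x (\<beta> x \<otimes>\<^bsub>H x\<^esub> g) = \<alpha> x (\<beta> x) * \<alpha> x g"
    using assms by (intro character_mult) (auto simp: prod_characters_def prod_carrier_def)
  moreover have "(\<Prod>i\<in>\<Omega> - {x}. \<alpha> i (shift x g \<beta> i)) = (\<Prod>i\<in>\<Omega> - {x}. \<alpha> i (\<beta> i))"
    unfolding shift_def by (rule prod.cong) auto
  ultimately show ?thesis
    unfolding char_eval_def
    using prod.remove[OF finite_index assms(3), of "\<lambda>i. \<alpha> i (shift x g \<beta> i)"]
      prod.remove[OF finite_index assms(3), of "\<lambda>i. \<alpha> i (\<beta> i)"]
    by (simp add: shift_def)
qed

lemma sum_ideal_fiber_eq_0:
  assumes "\<alpha> \<in> prod_characters \<Omega> H" and "x \<in> I" and "y \<in> I" and "(x, y) \<in> P" and "y \<noteq> x"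
    and "\<not> trivial_char (H x) (\<alpha> x)"
  shows "(\<Sum>\<beta>\<in>ideal_fiber I. char_eval \<Omega> \<alpha> \<beta>) = 0"
proof -
  have x: "x \<in> \<Omega>" using assms(4) P_in_index by blast
  obtain g where g: "g \<in> carrier (H x)" "\<alpha> x g \<noteq> 1"
    using assms(6) unfolding trivial_char_def by blast
  show ?thesis
    using bij_betw_shift_ideal_fiber[OF assms(2-5) g(1)] _ g(2)
  proof (rule sum_eq_0_if_permutation_scales)
    show "char_eval \<Omega> \<alpha> (shift x g \<beta>) = \<alpha> x g * char_eval \<Omega> \<alpha> \<beta>" if "\<beta> \<in> ideal_fiber I" for \<beta>
      using char_eval_shift[OF assms(1) _ x g(1)] that unfolding ideal_fiber_def by blast
  qed
qed

subsection \<open>The top ideal of a character\<close>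

definition supp_up :: "('i \<Rightarrow> 'a \<Rightarrow> complex) \<Rightarrow> 'i set" where
  "supp_up \<alpha> = down_closure \<Omega> (P\<inverse>) (supp_char \<Omega> H \<alpha>)"

definition top_ideal :: "('i \<Rightarrow> 'a \<Rightarrow> complex) \<Rightarrow> 'i set" where
  "top_ideal \<alpha> = (\<Omega> - supp_up \<alpha>) \<union> min_elems P (supp_up \<alpha>)"

definition admissible :: "('i \<Rightarrow> 'a \<Rightarrow> complex) \<Rightarrow> 'i set \<Rightarrow> bool" where
  "admissible \<alpha> I \<longleftrightarrow> (\<forall>x\<in>I. \<forall>y\<in>I. (x, y) \<in> P \<and> y \<noteq> x \<longrightarrow> trivial_char (H x) (\<alpha> x))"

lemma supp_char_subset_supp_up: "supp_char \<Omega> H \<alpha> \<subseteq> supp_up \<alpha>"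
  unfolding supp_up_def down_closure_def supp_char_def using P_refl by blast

lemma supp_up_upward: "j \<in> supp_up \<alpha> \<Longrightarrow> (j, k) \<in> P \<Longrightarrow> k \<in> supp_up \<alpha>"
  unfolding supp_up_def down_closure_def using P_trans P_in_index by blast

lemma supp_up_subset: "supp_up \<alpha> \<subseteq> \<Omega>"
  unfolding supp_up_def down_closure_def by blast

lemma is_ideal_top_ideal: "is_ideal (top_ideal \<alpha>)"
  unfolding is_ideal_def
proof (intro conjI allI impI)
  show "top_ideal \<alpha> \<subseteq> \<Omega>"
    unfolding top_ideal_def min_elems_def using supp_up_subset by blast
  fix j k assume k: "k \<in> top_ideal \<alpha>" and jk: "(j, k) \<in> P"
  show "j \<in> top_ideal \<alpha>"
  proof (cases "j \<in> supp_up \<alpha>")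
    case False then show ?thesis using jk P_in_index unfolding top_ideal_def by blast
  next
    case True
    then have "k \<in> min_elems P (supp_up \<alpha>)" using k jk supp_up_upward unfolding top_ideal_def by blast
    then have "j = k" using True jk unfolding min_elems_def by blast
    with k show ?thesis by simp
  qed
qed

lemma finite_top_ideal: "finite (top_ideal \<alpha>)"
  using is_ideal_top_ideal finite_index unfolding is_ideal_def by (metis finite_subset)

lemma min_supp_up_subset_maximal: "min_elems P (supp_up \<alpha>) \<subseteq> min_elems (P\<inverse>) (top_ideal \<alpha>)"
  unfolding top_ideal_def min_elems_def using supp_up_upward P_antisym by blast

lemma admissible_subset_top_ideal:
  assumes "is_ideal I" and "admissible \<alpha> I"
  shows "I \<subseteq> top_ideal \<alpha>"
proof
  fix x assume x: "x \<in> I"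
  have below_trivial: "trivial_char (H y) (\<alpha> y)" if "(y, x) \<in> P" "y \<noteq> x" for y
    using assms that x unfolding is_ideal_def admissible_def by blast
  show "x \<in> top_ideal \<alpha>"
  proof (cases "x \<in> supp_up \<alpha>")
    case False then show ?thesis using x assms(1) unfolding top_ideal_def is_ideal_def by blast
  next
    case True
    have "y = x" if y: "y \<in> supp_up \<alpha>" "(y, x) \<in> P" for y
    proof -
      obtain s where s: "s \<in> supp_char \<Omega> H \<alpha>" "(s, y) \<in> P"
        using y(1) unfolding supp_up_def down_closure_def by blast
      then have "(s, x) \<in> P" using y(2) P_trans by blast
      with s(1) below_trivial have "s = x" unfolding supp_char_def by blast
      then show "y = x" using s(2) y(2) P_antisym by blast
    qed
    with True show ?thesis unfolding top_ideal_def min_elems_def by blast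
  qed
qed

lemma sum_ideal_fiber_eq_0_unless_subset_top_ideal:
  assumes "\<alpha> \<in> prod_characters \<Omega> H" and "\<not> I \<subseteq> top_ideal \<alpha>"
  shows "(\<Sum>\<beta>\<in>ideal_fiber I. char_eval \<Omega> \<alpha> \<beta>) = 0"
proof (cases "ideal_fiber I = {}")
  case False
  then obtain \<beta> where "supp_ideal \<beta> = I" unfolding ideal_fiber_def by blast
  then have "\<not> admissible \<alpha> I"
    using admissible_subset_top_ideal is_ideal_supp_ideal assms(2) by blast
  then show ?thesis
    using sum_ideal_fiber_eq_0[OF assms(1)] unfolding admissible_def by blast
qed simp

definition fiber_coords :: "'i set \<Rightarrow> 'i \<Rightarrow> 'a set" where
  "fiber_coords I i =
     (if i \<notin> I then {\<one>\<^bsub>H i\<^esub>}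
      else if i \<in> min_elems (P\<inverse>) I then carrier (H i) - {\<one>\<^bsub>H i\<^esub>}
      else carrier (H i))"

lemma mem_fiber_coords:
  assumes "i \<in> \<Omega>" and "I \<subseteq> \<Omega>"
  shows "h \<in> fiber_coords I i \<longleftrightarrow>
    h \<in> carrier (H i) \<and> (h \<noteq> \<one>\<^bsub>H i\<^esub> \<longrightarrow> i \<in> I) \<and> (i \<in> min_elems (P\<inverse>) I \<longrightarrow> h \<noteq> \<one>\<^bsub>H i\<^esub>)"
proof -
  interpret comm_group "H i" using comm_group_H assms(1) .
  show ?thesis unfolding fiber_coords_def min_elems_def by auto
qed

lemma ideal_fiber_eq_PiE:
  assumes "is_ideal I"
  shows "ideal_fiber I = (\<Pi>\<^sub>E i\<in>\<Omega>. fiber_coords I i)"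
proof -
  have "I \<subseteq> \<Omega>" using assms unfolding is_ideal_def by blast
  have "supp_ideal \<beta> = I \<longleftrightarrow> supp_word \<Omega> H \<beta> \<subseteq> I \<and> min_elems (P\<inverse>) I \<subseteq> supp_word \<Omega> H \<beta>" for \<beta>
    unfolding supp_ideal_def by (rule down_closure_eq_ideal_iff[OF assms]) (auto simp: supp_word_def)
  then show ?thesis
    using mem_fiber_coords[OF _ \<open>I \<subseteq> \<Omega>\<close>] \<open>I \<subseteq> \<Omega>\<close>
    unfolding ideal_fiber_def prod_carrier_def supp_word_def min_elems_def
    by (auto simp: PiE_iff extensional_def)
qed

lemma fiber_coords_subset: "i \<in> \<Omega> \<Longrightarrow> fiber_coords I i \<subseteq> carrier (H i)"
proof -
  assume i: "i \<in> \<Omega>"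
  interpret comm_group "H i" using comm_group_H i .
  show ?thesis unfolding fiber_coords_def by auto
qed

lemma finite_fiber_coords: "i \<in> \<Omega> \<Longrightarrow> finite (fiber_coords I i)"
  by (rule finite_subset[OF fiber_coords_subset finite_H])

lemma fiber_coords_nonempty: "i \<in> \<Omega> \<Longrightarrow> fiber_coords I i \<noteq> {}"
proof -
  assume i: "i \<in> \<Omega>"
  interpret comm_group "H i" using comm_group_H i .
  have "card (carrier (H i) - {\<one>\<^bsub>H i\<^esub>}) \<noteq> 0"
    using card_H_ge_2[OF i] by (simp add: card_Diff_singleton)
  then have "carrier (H i) - {\<one>\<^bsub>H i\<^esub>} \<noteq> {}" by (metis card.empty)
  then show ?thesis unfolding fiber_coords_def by auto
qed

lemma sum_fiber_coords_top_ideal_neq_0: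
  assumes "\<alpha> \<in> prod_characters \<Omega> H" and i: "i \<in> \<Omega>"
  shows "(\<Sum>h\<in>fiber_coords (top_ideal \<alpha>) i. \<alpha> i h) \<noteq> 0"
proof -
  interpret comm_group "H i" using comm_group_H i .
  have \<chi>: "\<alpha> i \<in> characters (H i)" using assms unfolding prod_characters_def by blast
  let ?A = "fiber_coords (top_ideal \<alpha>) i"
  show ?thesis
  proof (cases "trivial_char (H i) (\<alpha> i)")
    case True
    then have "(\<Sum>h\<in>?A. \<alpha> i h) = of_nat (card ?A)"
      using fiber_coords_subset[OF i] unfolding trivial_char_def by (simp add: subset_iff)
    with finite_fiber_coords[OF i] fiber_coords_nonempty[OF i] show ?thesis by simp
  next
    case False
    then have "i \<in> supp_up \<alpha>" using i supp_char_subset_supp_up unfolding supp_char_def by blast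
    show ?thesis
    proof (cases "i \<in> top_ideal \<alpha>")
      case True
      with \<open>i \<in> supp_up \<alpha>\<close> have "i \<in> min_elems (P\<inverse>) (top_ideal \<alpha>)"
        using min_supp_up_subset_maximal unfolding top_ideal_def by blast
      with True have "?A = carrier (H i) - {\<one>\<^bsub>H i\<^esub>}" unfolding fiber_coords_def by simp
      then have "(\<Sum>h\<in>?A. \<alpha> i h) = (\<Sum>h\<in>carrier (H i). \<alpha> i h) - \<alpha> i \<one>\<^bsub>H i\<^esub>"
        by (simp add: sum_diff1 finite_H[OF i])
      also have "\<dots> = -1"
        using sum_character_eq_0[OF is_group finite_H[OF i] \<chi> False] character_one[OF is_monoid \<chi>]
        by simp
      finally show ?thesis by simp
    next
      case False
      then show ?thesis
        unfolding fiber_coords_def using character_one[OF is_monoid \<chi>] by simp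
    qed
  qed
qed

lemma sum_top_ideal_fiber_neq_0:
  assumes "\<alpha> \<in> prod_characters \<Omega> H"
  shows "(\<Sum>\<beta>\<in>ideal_fiber (top_ideal \<alpha>). char_eval \<Omega> \<alpha> \<beta>) \<noteq> 0"
proof -
  have "(\<Sum>\<beta>\<in>ideal_fiber (top_ideal \<alpha>). char_eval \<Omega> \<alpha> \<beta>)
      = (\<Prod>i\<in>\<Omega>. \<Sum>h\<in>fiber_coords (top_ideal \<alpha>) i. \<alpha> i h)"
    unfolding ideal_fiber_eq_PiE[OF is_ideal_top_ideal] char_eval_def
    using finite_index finite_fiber_coords by (intro prod_sum_PiE[symmetric])
  also have "\<dots> \<noteq> 0"
    using sum_fiber_coords_top_ideal_neq_0[OF assms] finite_index by simp
  finally show ?thesis .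
qed

subsection \<open>Block sums\<close>

definition block_sum :: "('i \<Rightarrow> 'a \<Rightarrow> complex) \<Rightarrow> nat \<Rightarrow> complex" where
  "block_sum \<alpha> w = (\<Sum>\<beta>\<in>{\<beta> \<in> prod_carrier \<Omega> H. P_weight \<Omega> H P \<beta> = w}. char_eval \<Omega> \<alpha> \<beta>)"

lemma block_sum_eq_sum_ideal_fibers:
  "block_sum \<alpha> w = (\<Sum>I\<in>{I. I \<subseteq> \<Omega> \<and> card I = w}. \<Sum>\<beta>\<in>ideal_fiber I. char_eval \<Omega> \<alpha> \<beta>)"
proof -
  have "finite {I. I \<subseteq> \<Omega> \<and> card I = w}"
    using finite_index by simp
  moreover have "supp_ideal ` {\<beta> \<in> prod_carrier \<Omega> H. P_weight \<Omega> H P \<beta> = w}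
      \<subseteq> {I. I \<subseteq> \<Omega> \<and> card I = w}"
    using is_ideal_supp_ideal unfolding is_ideal_def P_weight_eq_card_supp_ideal by blast
  ultimately have "block_sum \<alpha> w = (\<Sum>I\<in>{I. I \<subseteq> \<Omega> \<and> card I = w}.
      \<Sum>\<beta>\<in>{\<beta> \<in> {\<beta> \<in> prod_carrier \<Omega> H. P_weight \<Omega> H P \<beta> = w}. supp_ideal \<beta> = I}. char_eval \<Omega> \<alpha> \<beta>)"
    unfolding block_sum_def using finite_prod_carrier by (intro sum.group[symmetric]) auto
  also have "\<dots> = (\<Sum>I\<in>{I. I \<subseteq> \<Omega> \<and> card I = w}. \<Sum>\<beta>\<in>ideal_fiber I. char_eval \<Omega> \<alpha> \<beta>)"
    unfolding ideal_fiber_def P_weight_eq_card_supp_ideal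
    by (intro sum.cong refl arg_cong[where f = "sum _"]) auto
  finally show ?thesis .
qed

lemma block_sum_eq_0:
  assumes "\<alpha> \<in> prod_characters \<Omega> H" and "card (top_ideal \<alpha>) < w"
  shows "block_sum \<alpha> w = 0"
proof -
  have "\<not> I \<subseteq> top_ideal \<alpha>" if "card I = w" for I
  proof
    assume "I \<subseteq> top_ideal \<alpha>"
    with finite_top_ideal have "card I \<le> card (top_ideal \<alpha>)" by (rule card_mono)
    with that assms(2) show False by simp
  qed
  then show ?thesis unfolding block_sum_eq_sum_ideal_fibers
    using sum_ideal_fiber_eq_0_unless_subset_top_ideal[OF assms(1)] by simp
qed

lemma block_sum_card_top_ideal_neq_0:
  assumes "\<alpha> \<in> prod_characters \<Omega> H"
  shows "block_sum \<alpha> (card (top_ideal \<alpha>)) \<noteq> 0"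
proof -
  let ?T = "top_ideal \<alpha>" let ?Is = "{I. I \<subseteq> \<Omega> \<and> card I = card ?T}"
  have "?T \<subseteq> \<Omega>" using is_ideal_top_ideal unfolding is_ideal_def by blast
  have "(\<Sum>\<beta>\<in>ideal_fiber I. char_eval \<Omega> \<alpha> \<beta>) = 0" if "I \<in> ?Is - {?T}" for I
  proof (rule sum_ideal_fiber_eq_0_unless_subset_top_ideal[OF assms])
    show "\<not> I \<subseteq> ?T" using that card_subset_eq[OF finite_top_ideal] by blast
  qed
  moreover have "finite ?Is" using finite_index by simp
  moreover have "?T \<in> ?Is" using \<open>?T \<subseteq> \<Omega>\<close> by simp
  ultimately have "block_sum \<alpha> (card ?T) = (\<Sum>\<beta>\<in>ideal_fiber ?T. char_eval \<Omega> \<alpha> \<beta>)"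
    unfolding block_sum_eq_sum_ideal_fibers by (simp add: sum.remove)
  with sum_top_ideal_fiber_neq_0[OF assms] show ?thesis by simp
qed

lemma block_sum_eq_if_dual_partition_rel:
  assumes "dual_partition_rel \<Omega> H P \<alpha> \<gamma>"
  shows "block_sum \<alpha> w = block_sum \<gamma> w"
proof (cases "\<exists>\<beta>\<^sub>0 \<in> prod_carrier \<Omega> H. P_weight \<Omega> H P \<beta>\<^sub>0 = w")
  case True
  then have "{\<beta> \<in> prod_carrier \<Omega> H. P_weight \<Omega> H P \<beta> = w} \<in> weight_partition \<Omega> H P"
    unfolding weight_partition_def by blast
  with assms show ?thesis unfolding dual_partition_rel_def block_sum_def by blast
next
  case False
  then have "{\<beta> \<in> prod_carrier \<Omega> H. P_weight \<Omega> H P \<beta> = w} = {}" by blast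
  then show ?thesis unfolding block_sum_def by (metis sum.empty)
qed

lemma card_top_ideal_le_if_dual_partition_rel:
  assumes "dual_partition_rel \<Omega> H P \<alpha> \<gamma>"
  shows "card (top_ideal \<gamma>) \<le> card (top_ideal \<alpha>)"
proof (rule ccontr)
  assume "\<not> ?thesis"
  moreover have "\<alpha> \<in> prod_characters \<Omega> H" "\<gamma> \<in> prod_characters \<Omega> H"
    using assms unfolding dual_partition_rel_def by blast+
  ultimately show False
    using block_sum_eq_0 block_sum_card_top_ideal_neq_0 block_sum_eq_if_dual_partition_rel[OF assms]
    by (metis not_le)
qed

lemma card_supp_up_diff_min:
  "card (supp_up \<alpha>) - card (min_elems P (supp_up \<alpha>)) = card \<Omega> - card (top_ideal \<alpha>)"
proof -
  let ?D = "supp_up \<alpha>" and ?M = "min_elems P (supp_up \<alpha>)"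
  have "finite ?D" using supp_up_subset finite_index by (rule finite_subset)
  have "?M \<subseteq> ?D" unfolding min_elems_def by blast
  then have "finite ?M" using \<open>finite ?D\<close> by (rule finite_subset)
  have "card (top_ideal \<alpha>) = card (\<Omega> - ?D) + card ?M"
    unfolding top_ideal_def using finite_index \<open>finite ?M\<close> \<open>?M \<subseteq> ?D\<close>
    by (intro card_Un_disjoint) auto
  moreover have "card (\<Omega> - ?D) = card \<Omega> - card ?D"
    using \<open>finite ?D\<close> supp_up_subset by (rule card_Diff_subset)
  moreover have "card ?M \<le> card ?D" using \<open>finite ?D\<close> \<open>?M \<subseteq> ?D\<close> by (rule card_mono)
  moreover have "card ?D \<le> card \<Omega>" using finite_index supp_up_subset by (rule card_mono)
  ultimately show ?thesis by linarith
qed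

end

theorem proposition2p3:
  fixes \<Omega> :: "'i set" and H :: "'i \<Rightarrow> 'a monoid" and P :: "'i rel"
    and \<alpha> \<gamma> :: "'i \<Rightarrow> 'a \<Rightarrow> complex"
  assumes "finite \<Omega>"
    and "\<And>i. i \<in> \<Omega> \<Longrightarrow> comm_group (H i)"
    and "\<And>i. i \<in> \<Omega> \<Longrightarrow> finite (carrier (H i))"
    and "\<And>i. i \<in> \<Omega> \<Longrightarrow> card (carrier (H i)) \<ge> 2"
    and "P \<subseteq> \<Omega> \<times> \<Omega>" and "partial_order_on \<Omega> P"
    and "dual_partition_rel \<Omega> H P \<alpha> \<gamma>"
  shows "card (down_closure \<Omega> (P\<inverse>) (supp_char \<Omega> H \<alpha>))
           - card (min_elems P (down_closure \<Omega> (P\<inverse>) (supp_char \<Omega> H \<alpha>)))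
       = card (down_closure \<Omega> (P\<inverse>) (supp_char \<Omega> H \<gamma>))
           - card (min_elems P (down_closure \<Omega> (P\<inverse>) (supp_char \<Omega> H \<gamma>)))"
proof -
  interpret poset_space \<Omega> H P by (rule poset_space.intro[OF assms(1-6)])
  have "dual_partition_rel \<Omega> H P \<gamma> \<alpha>"
    using assms(7) unfolding dual_partition_rel_def by auto
  then have "card (top_ideal \<alpha>) = card (top_ideal \<gamma>)"
    using card_top_ideal_le_if_dual_partition_rel[OF assms(7)]
      card_top_ideal_le_if_dual_partition_rel by (simp add: le_antisym)
  then show ?thesis using card_supp_up_diff_min unfolding supp_up_def by metis
qed

end
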